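(* Let $F$ be a field, $t\ge 3$, and let $e_1,\dots,e_t$, $n_i$, $\sigma_i$ and $V$ be as follows: $e_1,\dots,e_t\in M_n(F)$ are nonzero pairwise orthogonal idempotents with $e_1+\cdots+e_t=I_n$, $n_i=\mathrm{rank}(e_i)$, $\sigma_1,\dots,\sigma_t\in F$ satisfy $\sum_i\sigma_ik_i\ne0$ for every integer tuple $\vec 0\ne(k_1,\dots,k_t)$ with $0\le k_i\le n_i$, and $V=\{a\in M_n(F): e_iae_j=0\ \forall i<j,\ \sum_i\sigma_i\mathrm{Tr}(e_iae_i)=0\}$. Let $u\in e_1M_n(F)e_2$ and $w\in e_2M_n(F)e_3$ with $uw\ne 0$. Then $U=F(u+w)+V$ is a Mathieu subspace of $M_n(F)$ containing $V$ as a proper subspace; in particular $V$ is not a maximal Mathieu subspace of $M_n(F)$.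
   Context: Let $\mathcal A$ be an associative algebra over a field $F$. An $F$-subspace $M\subseteq\mathcal A$ is a Mathieu subspace (MS) of $\mathcal A$ if for all $a,b,c\in\mathcal A$ such that $a^m\in M$ for all $m\ge 1$, there exists $N$ (depending on $a,b,c$) such that $ba^mc\in M$ for all $m\ge N$. A maximal MS of $\mathcal A$ is a proper MS of $\mathcal A$ that is not properly contained in any proper MS of $\mathcal A$. *)

theory Defs
  imports "HOL-Analysis.Analysis"
begin

text \<open>Square matrices M_n(F) are rendered as the type 'a^'n^'n over a field 'a,
  with matrix product (**), identity mat 1, library rank and trace.\<close>

definition mscale :: "'a::field \<Rightarrow> 'a^'n^'n \<Rightarrow> 'a^'n^'n" where
  "mscale c A = (\<chi> i j. c * A $ i $ j)"

definition mpow :: "'a::field^'n^'n \<Rightarrow> nat \<Rightarrow> 'a^'n^'n" where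
  "mpow A m = (((**) A) ^^ m) (mat 1)"

definition F_subspace :: "('a::field^'n^'n) set \<Rightarrow> bool" where
  "F_subspace M \<longleftrightarrow> 0 \<in> M \<and> (\<forall>x\<in>M. \<forall>y\<in>M. x + y \<in> M) \<and> (\<forall>c. \<forall>x\<in>M. mscale c x \<in> M)"

definition mathieu_subspace :: "('a::field^'n^'n) set \<Rightarrow> bool" where
  "mathieu_subspace M \<longleftrightarrow> F_subspace M \<and>
     (\<forall>a b c. (\<forall>m\<ge>1. mpow a m \<in> M) \<longrightarrow> (\<exists>N. \<forall>m\<ge>N. b ** mpow a m ** c \<in> M))"

definition maximal_mathieu_subspace :: "('a::field^'n^'n) set \<Rightarrow> bool" where
  "maximal_mathieu_subspace M \<longleftrightarrow> mathieu_subspace M \<and> M \<noteq> UNIV \<and>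
     \<not> (\<exists>M'. mathieu_subspace M' \<and> M' \<noteq> UNIV \<and> M \<subset> M')"

end

theory Submission
  imports Defs
begin

text \<open>Let a have all its positive powers in U and write a = c(u + w) + v with v \<in> V.
  Every element of U has zero (1,3) block, while v is block lower triangular, so the (1,3)
  block of a^2 is c^2 uw; hence c = 0 and a \<in> V. All powers of a are then block lower
  triangular elements of U, i.e. they lie in V. Since the powers of a span a finite-dimensional
  space, some a^N is a multiple a^(N+1) g(a); this yields an idempotent P = a h(a) with
  P a^N = a^N, and P lies in V. The diagonal blocks of P are idempotents, whose traces are
  their ranks, so the condition on \<sigma> forces them to vanish, and a block lower triangular
  idempotent with zero diagonal is zero. Thus a is nilpotent, and U is a Mathieu subspace;
  it is proper because uw \<notin> U.\<close>

lemma matrix_add_rdistrib: "(B + C) ** A = B ** A + C ** A"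
  for A :: "'a::field^'p^'n" and B C :: "'a^'n^'m"
  by (vector matrix_matrix_mult_def sum.distrib[symmetric] field_simps)

lemma matrix_mul_mscale_left: "mscale c A ** B = mscale c (A ** B)"
  by (simp add: mscale_def matrix_matrix_mult_def vec_eq_iff sum_distrib_left mult.assoc)

lemma matrix_mul_mscale_right: "A ** mscale c B = mscale c (A ** B)"
  by (simp add: mscale_def matrix_matrix_mult_def vec_eq_iff sum_distrib_left mult.left_commute)

lemma mscale_add_right: "mscale c (A + B) = mscale c A + mscale c B"
  by (simp add: mscale_def vec_eq_iff distrib_left)

lemma mscale_add_left: "mscale (c + d) A = mscale c A + mscale d A"
  by (simp add: mscale_def vec_eq_iff distrib_right)

lemma mscale_mscale: "mscale c (mscale d A) = mscale (c * d) A"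
  by (simp add: mscale_def vec_eq_iff mult.assoc)

lemma mscale_0_left [simp]: "mscale 0 A = 0"
  and mscale_0_right [simp]: "mscale c 0 = 0"
  and mscale_1 [simp]: "mscale 1 A = A"
  by (simp_all add: mscale_def vec_eq_iff)

lemma mscale_eq_0_iff: "mscale c A = 0 \<longleftrightarrow> c = 0 \<or> A = 0"
  by (auto simp: mscale_def vec_eq_iff)

lemma trace_mscale: "trace (mscale c A) = c * trace A"
  by (simp add: mscale_def trace_def sum_distrib_left)

lemma matrix_mul_sum_left: "A ** sum f S = (\<Sum>x\<in>S. A ** f x)"
  for A :: "'a::field^'n^'m"
  by (induction S rule: infinite_finite_induct) (simp_all add: matrix_add_ldistrib)

lemma matrix_mul_sum_right: "sum f S ** A = (\<Sum>x\<in>S. f x ** A)"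
  for A :: "'a::field^'p^'n"
  by (induction S rule: infinite_finite_induct) (simp_all add: matrix_add_rdistrib)

lemma mpow_0 [simp]: "mpow A 0 = mat 1"
  and mpow_Suc: "mpow A (Suc m) = A ** mpow A m"
  by (simp_all add: mpow_def)

lemma mpow_1: "mpow A 1 = A"
  by (simp add: mpow_Suc)

lemma mpow_add: "mpow A (m + n) = mpow A m ** mpow A n"
  by (induction m) (simp_all add: mpow_Suc matrix_mul_assoc)

lemma mpow_commute: "A ** mpow A m = mpow A m ** A"
  by (metis mpow_1 mpow_add add.commute)

lemma mpow_mult_commuting:
  assumes "A ** B = B ** A"
  shows "mpow (A ** B) k = mpow A k ** mpow B k"
proof -
  have B_commute: "B ** mpow A k = mpow A k ** B" for k
    by (induction k) (simp_all add: mpow_Suc matrix_mul_assoc assms, metis matrix_mul_assoc assms)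
  show ?thesis
    by (induction k) (simp_all add: mpow_Suc matrix_mul_assoc, metis matrix_mul_assoc B_commute)
qed

section \<open>Polynomials in a matrix and Fitting's idempotent\<close>

inductive_set matrix_polys :: "'a::field^'n^'n \<Rightarrow> ('a^'n^'n) set" for a where
  matrix_polys_one: "mat 1 \<in> matrix_polys a"
| matrix_polys_base_mult: "X \<in> matrix_polys a \<Longrightarrow> a ** X \<in> matrix_polys a"
| matrix_polys_add: "X \<in> matrix_polys a \<Longrightarrow> Y \<in> matrix_polys a \<Longrightarrow> X + Y \<in> matrix_polys a"
| matrix_polys_mscale: "X \<in> matrix_polys a \<Longrightarrow> mscale c X \<in> matrix_polys a"

lemma matrix_polys_0: "0 \<in> matrix_polys a"
  using matrix_polys_mscale[OF matrix_polys_one, where c = 0] by simp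

lemma mpow_in_matrix_polys: "mpow a k \<in> matrix_polys a"
  by (induction k) (auto simp: mpow_Suc intro: matrix_polys.intros)

lemma matrix_polys_commute_base: "X \<in> matrix_polys a \<Longrightarrow> a ** X = X ** a"
  by (induction rule: matrix_polys.induct)
     (simp_all add: matrix_mul_assoc matrix_add_ldistrib matrix_add_rdistrib
        matrix_mul_mscale_left matrix_mul_mscale_right)

lemma matrix_polys_mult: "X \<in> matrix_polys a \<Longrightarrow> Y \<in> matrix_polys a \<Longrightarrow> X ** Y \<in> matrix_polys a"
  by (induction rule: matrix_polys.induct)
     (auto simp: matrix_mul_assoc[symmetric] matrix_add_rdistrib matrix_mul_mscale_left
        intro: matrix_polys.intros)

lemma matrix_polys_commute:
  "X \<in> matrix_polys a \<Longrightarrow> Y \<in> matrix_polys a \<Longrightarrow> X ** Y = Y ** X"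
proof (induction rule: matrix_polys.induct)
  case (matrix_polys_base_mult X)
  then have "a ** X ** Y = (a ** Y) ** X" by (simp flip: matrix_mul_assoc)
  also have "\<dots> = Y ** (a ** X)"
    using matrix_polys_commute_base[OF matrix_polys_base_mult.prems] by (simp add: matrix_mul_assoc)
  finally show ?case .
qed (simp_all add: matrix_add_ldistrib matrix_add_rdistrib matrix_mul_mscale_left matrix_mul_mscale_right)

lemma matrix_polys_mpow: "X \<in> matrix_polys a \<Longrightarrow> mpow X k \<in> matrix_polys a"
  by (induction k) (auto simp: mpow_Suc intro: matrix_polys_one matrix_polys_mult)

lemma mpow_mult_matrix_polys_in_subspace:
  assumes S: "F_subspace S" and powers: "\<forall>m\<ge>1. mpow a m \<in> S" and X: "X \<in> matrix_polys a"
  shows "\<forall>m\<ge>1. mpow a m ** X \<in> S"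
  using X
proof (induction rule: matrix_polys.induct)
  case (matrix_polys_base_mult X)
  have "mpow a m ** (a ** X) = mpow a (Suc m) ** X" for m
    by (simp add: matrix_mul_assoc mpow_commute mpow_Suc)
  with matrix_polys_base_mult.IH show ?case by simp
qed (use S powers in \<open>simp_all add: F_subspace_def matrix_add_ldistrib matrix_mul_mscale_right\<close>)

definition flatten :: "'a::field^'n^'n \<Rightarrow> 'a^('n \<times> 'n)" where
  "flatten A = (\<chi> p. A $ fst p $ snd p)"

lemma flatten_0: "flatten 0 = 0"
  and flatten_add: "flatten (A + B) = flatten A + flatten B"
  and flatten_mscale: "flatten (mscale c A) = c *s flatten A"
  and flatten_eq_iff: "flatten A = flatten B \<longleftrightarrow> A = B"
  by (auto simp: flatten_def vec_eq_iff mscale_def)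

lemma flatten_mpow_in_span_of_higher_powers:
  fixes a :: "'a::field^'n^'n"
  obtains N where "flatten (mpow a N) \<in> vec.span (range (\<lambda>m. flatten (mpow a (Suc N + m))))"
proof -
  define W where "W N = range (\<lambda>m. flatten (mpow a (N + m)))" for N
  have W_Suc: "W (Suc N) \<subseteq> W N" for N
  proof
    fix x assume "x \<in> W (Suc N)"
    then obtain m where "x = flatten (mpow a (Suc N + m))"
      unfolding W_def by (rule rangeE)
    then have "x = flatten (mpow a (N + Suc m))"
      by simp
    then show "x \<in> W N"
      unfolding W_def by (rule range_eqI)
  qed
  have "\<exists>N. flatten (mpow a N) \<in> vec.span (W (Suc N))"
  proof (rule ccontr)
    assume none: "\<nexists>N. flatten (mpow a N) \<in> vec.span (W (Suc N))"
    have dim_decreasing: "vec.dim (W (Suc N)) < vec.dim (W N)" for N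
    proof -
      have "flatten (mpow a N) \<in> vec.span (W N)"
        unfolding W_def by (rule vec.span_base, rule range_eqI[where x = 0]) simp
      then have "vec.span (W (Suc N)) \<noteq> vec.span (W N)"
        using none by blast
      then show ?thesis
        using vec.span_mono[OF W_Suc] by (intro vec.dim_psubset) blast
    qed
    have "vec.dim (W N) + N \<le> vec.dim (W 0)" for N
    proof (induction N)
      case (Suc N)
      then show ?case using dim_decreasing[of N] by linarith
    qed simp
    from this[of "Suc (vec.dim (W 0))"] show False by linarith
  qed
  then obtain N where "flatten (mpow a N) \<in> vec.span (W (Suc N))" ..
  then show ?thesis
    unfolding W_def by (rule that)
qed

lemma mpow_eq_mpow_Suc_mult:
  fixes a :: "'a::field^'n^'n"
  obtains N G where "G \<in> matrix_polys a" "mpow a N = mpow a (Suc N) ** G"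
proof -
  obtain N where N: "flatten (mpow a N) \<in> vec.span (range (\<lambda>m. flatten (mpow a (Suc N + m))))"
    by (rule flatten_mpow_in_span_of_higher_powers)
  have "\<exists>G\<in>matrix_polys a. x = flatten (mpow a (Suc N) ** G)"
    if "x \<in> vec.span (range (\<lambda>m. flatten (mpow a (Suc N + m))))" for x
    using that
  proof (induction rule: vec.span_induct_alt)
    case base
    show ?case using matrix_polys_0 by (metis flatten_0 times0_right)
  next
    case (step c x y)
    then obtain m G where x: "x = flatten (mpow a (Suc N + m))"
      and G: "G \<in> matrix_polys a" and y: "y = flatten (mpow a (Suc N) ** G)"
      by blast
    have "c *s x + y = flatten (mpow a (Suc N) ** (mscale c (mpow a m) + G))"
      by (simp only: x y mpow_add flatten_add flatten_mscale matrix_add_ldistrib matrix_mul_mscale_right)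
    moreover have "mscale c (mpow a m) + G \<in> matrix_polys a"
      by (intro matrix_polys_add matrix_polys_mscale mpow_in_matrix_polys G)
    ultimately show ?case by blast
  qed
  with N obtain G where "G \<in> matrix_polys a" "flatten (mpow a N) = flatten (mpow a (Suc N) ** G)"
    by blast
  with that show ?thesis
    unfolding flatten_eq_iff by blast
qed

lemma fitting_idempotent:
  fixes a :: "'a::field^'n^'n"
  obtains N X where "X \<in> matrix_polys a"
    "(a ** X) ** (a ** X) = a ** X" "(a ** X) ** mpow a N = mpow a N"
proof -
  obtain N G where G: "G \<in> matrix_polys a" and rel: "mpow a N = mpow a (Suc N) ** G"
    by (rule mpow_eq_mpow_Suc_mult)
  define H where "H = a ** G"
  have H: "H \<in> matrix_polys a"
    unfolding H_def by (rule matrix_polys_base_mult[OF G])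
  have "mpow a N ** H = mpow a (Suc N) ** G"
    by (simp add: H_def mpow_Suc mpow_commute matrix_mul_assoc)
  then have aN_H: "mpow a N ** H = mpow a N"
    using rel by simp
  have aN_Hk: "mpow a N ** mpow H k = mpow a N" for k
    by (induction k) (simp_all add: mpow_Suc matrix_mul_assoc aN_H)
  define P where "P = mpow H (Suc N)"
  have "P = mpow a (Suc N) ** mpow G (Suc N)"
    unfolding P_def H_def by (rule mpow_mult_commuting[OF matrix_polys_commute_base[OF G]])
  also have "\<dots> = mpow G (Suc N) ** mpow a (Suc N)"
    by (rule matrix_polys_commute[OF mpow_in_matrix_polys matrix_polys_mpow[OF G]])
  also have "\<dots> = mpow G (Suc N) ** a ** mpow a N"
    by (simp add: mpow_Suc matrix_mul_assoc)
  finally have P_H: "P ** H = P"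
    by (simp add: aN_H flip: matrix_mul_assoc)
  have "P ** mpow H k = P" for k
    by (induction k) (simp_all add: mpow_Suc matrix_mul_assoc P_H)
  then have "P ** P = P"
    by (simp add: P_def)
  moreover have "P ** mpow a N = mpow a N"
    using matrix_polys_commute[OF matrix_polys_mpow[OF H] mpow_in_matrix_polys] aN_Hk
    by (simp add: P_def)
  moreover have "P = a ** (G ** mpow H N)"
    by (simp add: P_def H_def mpow_Suc matrix_mul_assoc)
  moreover have "G ** mpow H N \<in> matrix_polys a"
    by (intro matrix_polys_mult G matrix_polys_mpow H)
  ultimately show ?thesis
    using that by metis
qed

section \<open>Trace and rank of idempotent matrices\<close>

lemma row_matrix_mul: "row i (X ** Y) = (\<Sum>k\<in>UNIV. X $ i $ k *s row k Y)"
  for X :: "'a::field^'n^'m" and Y :: "'a^'p^'n"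
  by (simp add: row_def matrix_matrix_mult_def vec_eq_iff)

lemma rank_mul_le_right_gen: "rank (X ** Y) \<le> rank Y"
  for X :: "'a::field^'n^'m" and Y :: "'a^'p^'n"
proof -
  have "rows (X ** Y) \<subseteq> vec.span (rows Y)"
  proof
    fix r assume "r \<in> rows (X ** Y)"
    then obtain i where r: "r = row i (X ** Y)"
      by (auto simp: rows_def)
    show "r \<in> vec.span (rows Y)"
      unfolding r row_matrix_mul
      by (intro vec.span_sum vec.span_scale vec.span_base) (auto simp: rows_def)
  qed
  then show ?thesis
    unfolding row_rank_def_gen by (metis vec.dim_span vec.dim_subset)
qed

lemma rank_eq_0_gen: "rank A = 0 \<Longrightarrow> A = 0"
  for A :: "'a::field^'n^'m"
proof -
  assume "rank A = 0"
  then have "row i A = 0" for i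
    by (auto simp: row_rank_def_gen rows_def)
  then show "A = 0"
    by (simp add: row_def vec_eq_iff)
qed

lemma vector_matrix_mult_eq_sum_rows: "x v* Q = (\<Sum>i\<in>UNIV. x $ i *s row i Q)"
  for Q :: "'a::field^'n^'m"
  by (simp add: vector_matrix_mult_def row_def vec_eq_iff mult.commute)

lemma idempotent_fixes_row_space:
  fixes Q :: "'a::field^'n^'n"
  assumes "Q ** Q = Q" and "x \<in> vec.span (rows Q)"
  shows "x v* Q = x"
  using assms(2)
proof (induction rule: vec.span_induct_alt)
  case (step c x y)
  then obtain i where "x = row i Q"
    by (auto simp: rows_def)
  moreover have "row i Q v* Q = row i (Q ** Q)"
    by (simp add: vector_matrix_mult_def row_def matrix_matrix_mult_def vec_eq_iff mult.commute)
  ultimately show ?case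
    using step assms(1) by (simp add: vector_matrix_left_distrib scalar_vector_matrix_assoc)
qed simp

lemma trace_idempotent:
  fixes Q :: "'a::field^'n^'n"
  assumes QQ: "Q ** Q = Q"
  shows "trace Q = of_nat (rank Q)"
proof -
  obtain B where B: "B \<subseteq> rows Q" "vec.independent B" "rows Q \<subseteq> vec.span B"
      "card B = vec.dim (rows Q)"
    using vec.basis_exists by blast
  have fin: "finite B"
    using B(2) vec.finiteI_independent by blast
  have row_in_span: "row i Q \<in> vec.span B" for i
    using B(3) by (auto simp: rows_def)
  let ?R = "vec.representation B"
  have row_expansion: "row i Q = (\<Sum>b\<in>B. ?R (row i Q) b *s b)" for i
    using vec.sum_representation_eq[OF B(2) row_in_span fin] by simp
  \<comment> \<open>b = b Q = \<Sum>i. b_i (row i Q); compare the b-coordinates of both sides.\<close>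
  have diagonal_coordinate: "(\<Sum>i\<in>UNIV. b $ i * ?R (row i Q) b) = 1" if b: "b \<in> B" for b
  proof -
    have "b v* Q = b"
      using B(1) b by (intro idempotent_fixes_row_space[OF QQ] vec.span_base) auto
    then have "?R b b = ?R (\<Sum>i\<in>UNIV. b $ i *s row i Q) b"
      by (simp add: vector_matrix_mult_eq_sum_rows)
    also have "\<dots> = (\<Sum>i\<in>UNIV. ?R (b $ i *s row i Q) b)"
      using B(2) by (simp add: vec.representation_sum vec.span_scale row_in_span)
    also have "\<dots> = (\<Sum>i\<in>UNIV. b $ i * ?R (row i Q) b)"
      using B(2) by (simp add: vec.representation_scale row_in_span)
    finally show ?thesis
      using vec.representation_basis[OF B(2) b] by simp
  qed
  have "trace Q = (\<Sum>i\<in>UNIV. row i Q $ i)"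
    by (simp add: trace_def row_def)
  also have "\<dots> = (\<Sum>i\<in>UNIV. \<Sum>b\<in>B. ?R (row i Q) b * b $ i)"
    by (subst row_expansion) simp
  also have "\<dots> = (\<Sum>b\<in>B. \<Sum>i\<in>UNIV. b $ i * ?R (row i Q) b)"
    by (subst sum.swap) (simp add: mult.commute)
  also have "\<dots> = of_nat (rank Q)"
    using diagonal_coordinate by (simp add: row_rank_def_gen B(4))
  finally show ?thesis .
qed

section \<open>Block lower triangular matrices\<close>

locale orthogonal_idempotents =
  fixes e :: "nat \<Rightarrow> 'a::field^'n^'n" and t :: nat
  assumes idem: "\<forall>i\<in>{1..t}. e i ** e i = e i"
    and orth: "\<forall>i\<in>{1..t}. \<forall>j\<in>{1..t}. i \<noteq> j \<longrightarrow> e i ** e j = 0"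
    and sum_id: "(\<Sum>i=1..t. e i) = mat 1"
begin

definition block_lower :: "'a^'n^'n \<Rightarrow> bool" where
  "block_lower X \<longleftrightarrow> (\<forall>i\<in>{1..t}. \<forall>j\<in>{1..t}. i < j \<longrightarrow> e i ** X ** e j = 0)"

lemma block_of_mult:
  "e i ** (X ** Y) ** e j = (\<Sum>l=1..t. (e i ** X ** e l) ** (e l ** Y ** e j))"
proof -
  have "e i ** (X ** Y) ** e j = e i ** X ** mat 1 ** Y ** e j"
    by (simp add: matrix_mul_assoc)
  also have "\<dots> = (\<Sum>l=1..t. e i ** X ** e l ** Y ** e j)"
    by (simp only: sum_id[symmetric] matrix_mul_sum_left matrix_mul_sum_right)
  also have "\<dots> = (\<Sum>l=1..t. e i ** X ** (e l ** e l) ** Y ** e j)"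
    using idem by (intro sum.cong) simp_all
  finally show ?thesis
    by (simp add: matrix_mul_assoc)
qed

lemma sum_blocks: "X = (\<Sum>i=1..t. \<Sum>j=1..t. e i ** X ** e j)"
proof -
  have "X = (\<Sum>i=1..t. e i) ** X ** (\<Sum>j=1..t. e j)"
    by (simp only: sum_id matrix_mul_lid matrix_mul_rid)
  also have "\<dots> = (\<Sum>j=1..t. \<Sum>i=1..t. e i ** X ** e j)"
    by (simp only: matrix_mul_sum_left matrix_mul_sum_right)
  also have "\<dots> = (\<Sum>i=1..t. \<Sum>j=1..t. e i ** X ** e j)"
    by (rule sum.swap)
  finally show ?thesis .
qed

lemma block_lower_mult:
  assumes "block_lower X" "block_lower Y"
  shows "block_lower (X ** Y)"
  unfolding block_lower_def
proof (intro ballI impI)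
  fix i j assume ij: "i \<in> {1..t}" "j \<in> {1..t}" "i < j"
  have "(e i ** X ** e l) ** (e l ** Y ** e j) = 0" if l: "l \<in> {1..t}" for l
    using assms ij l by (cases "i < l") (auto simp: block_lower_def)
  then show "e i ** (X ** Y) ** e j = 0"
    by (simp add: block_of_mult)
qed

lemma block_lower_mpow: "block_lower X \<Longrightarrow> block_lower (mpow X m)"
proof (induction m)
  case 0
  show ?case
    using orth by (simp add: block_lower_def)
qed (simp add: mpow_Suc block_lower_mult)

lemma diagonal_block_of_mult:
  assumes "block_lower X" "block_lower Y" "i \<in> {1..t}"
  shows "e i ** (X ** Y) ** e i = (e i ** X ** e i) ** (e i ** Y ** e i)"
proof -
  have off_diagonal: "(e i ** X ** e l) ** (e l ** Y ** e i) = 0" if "l \<in> {1..t}" "l \<noteq> i" for l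
    using assms that by (cases "i < l") (auto simp: block_lower_def)
  have "e i ** (X ** Y) ** e i = (\<Sum>l=1..t. (e i ** X ** e l) ** (e l ** Y ** e i))"
    by (rule block_of_mult)
  also have "\<dots> = (\<Sum>l=1..t. if l = i then (e i ** X ** e i) ** (e i ** Y ** e i) else 0)"
    using off_diagonal by (intro sum.cong) auto
  also have "\<dots> = (e i ** X ** e i) ** (e i ** Y ** e i)"
    using assms(3) by simp
  finally show ?thesis .
qed

lemma block_lower_idempotent_eq_0:
  assumes lower: "block_lower P" and idempotent: "P ** P = P"
    and diagonal: "\<forall>i\<in>{1..t}. e i ** P ** e i = 0"
  shows "P = 0"
proof -
  \<comment> \<open>Expanding P = P P blockwise moves the vanishing blocks one step further below the diagonal.\<close>
  have "\<forall>i\<in>{1..t}. \<forall>j\<in>{1..t}. i < j + Suc r \<longrightarrow> e i ** P ** e j = 0" for r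
  proof (induction r)
    case 0
    then show ?case
      using lower diagonal by (auto simp: block_lower_def less_Suc_eq)
  next
    case (Suc r)
    show ?case
    proof (intro ballI impI)
      fix i j assume ij: "i \<in> {1..t}" "j \<in> {1..t}" "i < j + Suc (Suc r)"
      have "(e i ** P ** e l) ** (e l ** P ** e j) = 0" if "l \<in> {1..t}" for l
        using Suc.IH ij that by (cases "l < i") auto
      then show "e i ** P ** e j = 0"
        using block_of_mult[of i P P j] by (simp add: idempotent)
    qed
  qed
  from this[of t] have "\<forall>i\<in>{1..t}. \<forall>j\<in>{1..t}. e i ** P ** e j = 0"
    by auto
  then show ?thesis
    by (subst sum_blocks) simp
qed

definition admissible_weights :: "(nat \<Rightarrow> 'a) \<Rightarrow> bool" where
  "admissible_weights \<sigma> \<longleftrightarrow>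
    (\<forall>k :: nat \<Rightarrow> nat. (\<forall>i\<in>{1..t}. k i \<le> rank (e i)) \<and> (\<exists>i\<in>{1..t}. k i \<noteq> 0)
       \<longrightarrow> (\<Sum>i=1..t. \<sigma> i * of_nat (k i)) \<noteq> 0)"

definition block_lower_traceless :: "(nat \<Rightarrow> 'a) \<Rightarrow> ('a^'n^'n) set" where
  "block_lower_traceless \<sigma> =
    {X. block_lower X \<and> (\<Sum>i=1..t. \<sigma> i * trace (e i ** X ** e i)) = 0}"

lemma F_subspace_block_lower_traceless: "F_subspace (block_lower_traceless \<sigma>)"
  unfolding F_subspace_def block_lower_traceless_def block_lower_def
  by (simp add: matrix_add_ldistrib matrix_add_rdistrib trace_add distrib_left sum.distrib
      matrix_mul_mscale_left matrix_mul_mscale_right trace_mscale mult.left_commute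
      trace_0[unfolded mat_0] flip: sum_distrib_left)

lemma idempotent_in_block_lower_traceless_eq_0:
  assumes \<sigma>: "admissible_weights \<sigma>"
    and P: "P \<in> block_lower_traceless \<sigma>" and idempotent: "P ** P = P"
  shows "P = 0"
proof -
  have lower: "block_lower P"
    using P by (simp add: block_lower_traceless_def)
  define k where "k i = rank (e i ** P ** e i)" for i
  have diagonal_idempotent: "(e i ** P ** e i) ** (e i ** P ** e i) = e i ** P ** e i"
    if "i \<in> {1..t}" for i
    using diagonal_block_of_mult[OF lower lower that] idempotent by simp
  have "(\<Sum>i=1..t. \<sigma> i * of_nat (k i)) = (\<Sum>i=1..t. \<sigma> i * trace (e i ** P ** e i))"
    by (intro sum.cong) (simp_all add: k_def trace_idempotent[OF diagonal_idempotent])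
  also have "\<dots> = 0"
    using P by (simp add: block_lower_traceless_def)
  finally have "(\<Sum>i=1..t. \<sigma> i * of_nat (k i)) = 0" .
  moreover have "\<forall>i\<in>{1..t}. k i \<le> rank (e i)"
    by (simp add: k_def rank_mul_le_right_gen)
  ultimately have "\<forall>i\<in>{1..t}. k i = 0"
    using \<sigma> unfolding admissible_weights_def by blast
  then have "\<forall>i\<in>{1..t}. e i ** P ** e i = 0"
    by (simp add: k_def rank_eq_0_gen)
  then show ?thesis
    using block_lower_idempotent_eq_0[OF lower idempotent] by simp
qed

lemma block_lower_traceless_powers_nilpotent:
  assumes \<sigma>: "admissible_weights \<sigma>"
    and powers: "\<forall>m\<ge>1. mpow a m \<in> block_lower_traceless \<sigma>"
  obtains N where "mpow a N = 0"
proof -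
  obtain N X where X: "X \<in> matrix_polys a"
    and idempotent: "(a ** X) ** (a ** X) = a ** X" and fixes_power: "(a ** X) ** mpow a N = mpow a N"
    by (rule fitting_idempotent)
  have "a ** X \<in> block_lower_traceless \<sigma>"
    using mpow_mult_matrix_polys_in_subspace[OF F_subspace_block_lower_traceless powers X, rule_format, of 1]
    by (simp add: mpow_Suc)
  then have "a ** X = 0"
    by (rule idempotent_in_block_lower_traceless_eq_0[OF \<sigma> _ idempotent])
  then show ?thesis
    using fixes_power that by simp
qed

end

section \<open>Extending V by a corner element\<close>

locale corner_extension = orthogonal_idempotents e t
  for e :: "nat \<Rightarrow> 'a::field^'n^'n" and t +
  fixes \<sigma> :: "nat \<Rightarrow> 'a" and u w :: "'a^'n^'n"
  assumes t3: "t \<ge> 3"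
    and \<sigma>: "admissible_weights \<sigma>"
    and u_block: "\<exists>x. u = e 1 ** x ** e 2"
    and w_block: "\<exists>x. w = e 2 ** x ** e 3"
    and uw: "u ** w \<noteq> 0"
begin

abbreviation V :: "('a^'n^'n) set" where
  "V \<equiv> block_lower_traceless \<sigma>"

definition U :: "('a^'n^'n) set" where
  "U = {mscale c (u + w) + v | c v. v \<in> V}"

lemma u_w_blocks:
  "e 1 ** u = u" "u ** e 2 = u" "u ** e 3 = 0"
  "e 1 ** w = 0" "e 2 ** w = w" "w ** e 3 = w"
proof -
  have indices: "1 \<in> {1..t}" "2 \<in> {1..t}" "3 \<in> {1..t}"
    using t3 by auto
  then have "e 1 ** e 1 = e 1" "e 2 ** e 2 = e 2" "e 3 ** e 3 = e 3"
    and "e 1 ** e 2 = 0" "e 2 ** e 3 = 0"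
    using idem orth by (auto simp del: One_nat_def)
  moreover obtain x y where "u = e 1 ** x ** e 2" "w = e 2 ** y ** e 3"
    using u_block w_block by blast
  ultimately show "e 1 ** u = u" "u ** e 2 = u" "u ** e 3 = 0"
    "e 1 ** w = 0" "e 2 ** w = w" "w ** e 3 = w"
    by (simp_all add: matrix_mul_assoc, simp_all flip: matrix_mul_assoc)
qed

lemma V_blocks:
  assumes "v \<in> V"
  shows "e 1 ** v ** e 2 = 0" "e 1 ** v ** e 3 = 0" "e 2 ** v ** e 3 = 0"
  using assms t3 by (auto simp: block_lower_traceless_def block_lower_def simp del: One_nat_def)

lemma U_blocks_13:
  assumes "X \<in> U"
  shows "e 1 ** X ** e 3 = 0"
proof -
  obtain c v where "X = mscale c (u + w) + v" "v \<in> V"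
    using assms by (auto simp: U_def)
  then show ?thesis
    using u_w_blocks V_blocks
    by (simp add: matrix_add_ldistrib matrix_add_rdistrib matrix_mul_mscale_left matrix_mul_mscale_right)
qed

lemma U_memI: "v \<in> V \<Longrightarrow> mscale c (u + w) + v \<in> U"
  by (auto simp: U_def)

lemma F_subspace_U: "F_subspace U"
  unfolding F_subspace_def
proof (intro conjI ballI allI)
  have V: "0 \<in> V" "\<And>v v'. v \<in> V \<Longrightarrow> v' \<in> V \<Longrightarrow> v + v' \<in> V" "\<And>d v. v \<in> V \<Longrightarrow> mscale d v \<in> V"
    using F_subspace_block_lower_traceless by (auto simp: F_subspace_def)
  show "0 \<in> U"
    using U_memI[OF V(1), of 0] by simp
  fix X assume "X \<in> U"
  then obtain c v where X: "X = mscale c (u + w) + v" and v: "v \<in> V"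
    by (auto simp: U_def)
  fix Y assume "Y \<in> U"
  then obtain c' v' where Y: "Y = mscale c' (u + w) + v'" and v': "v' \<in> V"
    by (auto simp: U_def)
  have "X + Y = mscale (c + c') (u + w) + (v + v')"
    by (simp add: X Y mscale_add_left algebra_simps)
  then show "X + Y \<in> U"
    using U_memI[OF V(2)[OF v v']] by simp
next
  fix d X assume "X \<in> U"
  then obtain c v where X: "X = mscale c (u + w) + v" and v: "v \<in> V"
    by (auto simp: U_def)
  have "mscale d X = mscale (d * c) (u + w) + mscale d v"
    by (simp add: X mscale_add_right mscale_mscale)
  then show "mscale d X \<in> U"
    using U_memI F_subspace_block_lower_traceless v by (simp add: F_subspace_def)
qed

lemma V_psubset_U: "V \<subset> U"
proof -
  have "V \<subseteq> U"
    using U_memI[where c = 0] by auto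
  moreover have "u + w \<in> U"
    using U_memI[where c = 1] F_subspace_block_lower_traceless by (force simp: F_subspace_def)
  moreover have "u + w \<notin> V"
  proof
    assume "u + w \<in> V"
    then have "e 1 ** (u + w) ** e 2 = 0"
      by (rule V_blocks)
    then have "u = 0"
      using u_w_blocks by (simp add: matrix_add_ldistrib matrix_add_rdistrib)
    then show False
      using uw by simp
  qed
  ultimately show ?thesis
    by blast
qed

lemma U_neq_UNIV: "U \<noteq> UNIV"
proof
  assume "U = UNIV"
  then have "e 1 ** (u ** w) ** e 3 = 0"
    by (intro U_blocks_13) simp
  moreover have "e 1 ** (u ** w) ** e 3 = u ** w"
    using u_w_blocks by (simp add: matrix_mul_assoc) (simp flip: matrix_mul_assoc)
  ultimately show False
    using uw by simp
qed

lemma block_lower_in_U_imp_in_V: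
  assumes "X \<in> U" and "block_lower X"
  shows "X \<in> V"
proof -
  obtain c v where X: "X = mscale c (u + w) + v" and v: "v \<in> V"
    using assms(1) by (auto simp: U_def)
  have "e 1 ** X ** e 2 = 0"
    using assms(2) t3 by (auto simp: block_lower_def simp del: One_nat_def)
  moreover have "e 1 ** X ** e 2 = mscale c u"
    using u_w_blocks V_blocks[OF v] by (simp add: X matrix_add_ldistrib matrix_add_rdistrib
        matrix_mul_mscale_left matrix_mul_mscale_right)
  ultimately have "c = 0"
    using uw by (auto simp: mscale_eq_0_iff)
  then show ?thesis
    using X v by simp
qed

lemma square_in_U_imp_in_V:
  assumes a: "a \<in> U" and a2: "a ** a \<in> U"
  shows "a \<in> V"
proof -
  obtain c v where a_eq: "a = mscale c (u + w) + v" and v: "v \<in> V"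
    using a by (auto simp: U_def)
  have "block_lower (v ** v)"
    using v by (auto simp: block_lower_traceless_def intro: block_lower_mult)
  then have vv: "e 1 ** v ** (v ** e 3) = 0"
    using t3 by (auto simp: block_lower_def matrix_mul_assoc simp del: One_nat_def)
  have uv: "u ** (v ** e 3) = 0"
    using u_w_blocks(2) V_blocks(3)[OF v] by (metis matrix_mul_assoc times0_right)
  have vw: "e 1 ** v ** w = 0"
    using u_w_blocks(5) V_blocks(1)[OF v] by (metis matrix_mul_assoc times0_left)
  have left: "e 1 ** a = mscale c u + e 1 ** v"
    using u_w_blocks by (simp add: a_eq matrix_add_ldistrib matrix_mul_mscale_right)
  have right: "a ** e 3 = mscale c w + v ** e 3"
    using u_w_blocks by (simp add: a_eq matrix_add_rdistrib matrix_mul_mscale_left)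
  have "e 1 ** (a ** a) ** e 3 = (e 1 ** a) ** (a ** e 3)"
    by (simp add: matrix_mul_assoc)
  also have "\<dots> = (mscale c u + e 1 ** v) ** (mscale c w + v ** e 3)"
    by (simp only: left right)
  also have "\<dots> = mscale (c * c) (u ** w)"
    by (simp add: matrix_add_ldistrib matrix_add_rdistrib matrix_mul_mscale_left
        matrix_mul_mscale_right mscale_mscale uv vw vv del: One_nat_def)
  finally have "c * c = 0"
    using U_blocks_13[OF a2] uw by (simp add: mscale_eq_0_iff)
  then show ?thesis
    using a_eq v by simp
qed

lemma mathieu_subspace_U: "mathieu_subspace U"
  unfolding mathieu_subspace_def
proof (intro conjI F_subspace_U allI impI)
  fix a b c :: "'a^'n^'n"
  assume powers: "\<forall>m\<ge>1. mpow a m \<in> U"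
  have "a \<in> V"
    using square_in_U_imp_in_V powers[rule_format, of 1] powers[rule_format, of 2]
    by (simp add: mpow_Suc numeral_2_eq_2)
  then have "block_lower (mpow a m)" for m
    by (simp add: block_lower_traceless_def block_lower_mpow)
  then have "\<forall>m\<ge>1. mpow a m \<in> V"
    using powers block_lower_in_U_imp_in_V by blast
  then obtain N where "mpow a N = 0"
    by (rule block_lower_traceless_powers_nilpotent[OF \<sigma>])
  then have "b ** mpow a m ** c \<in> U" if "m \<ge> N" for m
    using mpow_add[of a "m - N" N] that F_subspace_U by (simp add: F_subspace_def)
  then show "\<exists>N. \<forall>m\<ge>N. b ** mpow a m ** c \<in> U"
    by blast
qed

end

theorem mainTheorem3:
  fixes e :: "nat \<Rightarrow> 'a::field^'n^'n"
    and \<sigma> :: "nat \<Rightarrow> 'a"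
    and t :: nat
    and V U :: "('a^'n^'n) set"
    and u w :: "'a^'n^'n"
  assumes t3: "t \<ge> 3"
    and nonzero: "\<forall>i\<in>{1..t}. e i \<noteq> 0"
    and idem: "\<forall>i\<in>{1..t}. e i ** e i = e i"
    and orth: "\<forall>i\<in>{1..t}. \<forall>j\<in>{1..t}. i \<noteq> j \<longrightarrow> e i ** e j = 0"
    and sum_id: "(\<Sum>i=1..t. e i) = mat 1"
    and sigma_cond: "\<forall>k :: nat \<Rightarrow> nat. (\<forall>i\<in>{1..t}. k i \<le> rank (e i)) \<and> (\<exists>i\<in>{1..t}. k i \<noteq> 0)
                        \<longrightarrow> (\<Sum>i=1..t. \<sigma> i * of_nat (k i)) \<noteq> 0"
    and V_def: "V = {a. (\<forall>i\<in>{1..t}. \<forall>j\<in>{1..t}. i < j \<longrightarrow> e i ** a ** e j = 0) \<and>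
                        (\<Sum>i=1..t. \<sigma> i * trace (e i ** a ** e i)) = 0}"
    and u_in: "\<exists>x. u = e 1 ** x ** e 2"
    and w_in: "\<exists>x. w = e 2 ** x ** e 3"
    and uw: "u ** w \<noteq> 0"
    and U_def: "U = {mscale c (u + w) + v | c v. v \<in> V}"
  shows "mathieu_subspace U \<and> V \<subset> U \<and> \<not> maximal_mathieu_subspace V"
proof -
  interpret orthogonal_idempotents e t
    using idem orth sum_id by unfold_locales
  have "admissible_weights \<sigma>"
    using sigma_cond unfolding admissible_weights_def .
  then interpret E: corner_extension e t \<sigma> u w
    using t3 u_in w_in uw by unfold_locales
  have V: "V = block_lower_traceless \<sigma>"
    unfolding V_def block_lower_traceless_def block_lower_def ..
  have U: "U = E.U"
    unfolding U_def E.U_def V ..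
  show ?thesis
    using E.mathieu_subspace_U E.V_psubset_U E.U_neq_UNIV
    unfolding U V maximal_mathieu_subspace_def by blast
qed

end
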